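(* For $n\ge 3$, the commutator subgroup $[B_n,B_n]$ is densely ordered by the (restriction of the) Dehornoy ordering; i.e. it has no least positive element, equivalently for any $f<g$ in $[B_n,B_n]$ there is $h\in[B_n,B_n]$ with $f<h<g$.
   Context: $B_n$ is the Artin braid group with generators $\sigma_1,\dots,\sigma_{n-1}$. A word in the generators is $i$-positive if it contains only $\sigma_1,\dots,\sigma_i$ and their inverses, $\sigma_i$ occurs, and every occurrence of $\sigma_i$ has positive exponent; a braid is $i$-positive if some representative word is. The Dehornoy ordering is the left-invariant total order on $B_n$ whose positive cone consists of all braids that are $i$-positive for some $i$. *)

theory Defs
  imports Main
begin

text \<open>Braid words: a letter (i, True) stands for sigma_i, (i, False) for sigma_i inverse.
  The braid group B_n is the group presented by generators sigma_1..sigma_(n-1) and the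
  Artin relations; we represent braids by words and equality in B_n by the congruence
  braid_eq n generated by free cancellation and the braid relations.\<close>

type_synonym letter = "nat \<times> bool"
type_synonym bword = "letter list"

definition valid_word :: "nat \<Rightarrow> bword \<Rightarrow> bool" where
  "valid_word n w \<longleftrightarrow> (\<forall>(i, e) \<in> set w. 1 \<le> i \<and> i < n)"

definition inv_word :: "bword \<Rightarrow> bword" where
  "inv_word w = rev (map (\<lambda>(i, e). (i, \<not> e)) w)"

inductive basic_rel :: "nat \<Rightarrow> bword \<Rightarrow> bword \<Rightarrow> bool" for n where
  cancel: "1 \<le> i \<Longrightarrow> i < n \<Longrightarrow> basic_rel n [(i, e), (i, \<not> e)] []"
| far: "1 \<le> i \<Longrightarrow> i < n \<Longrightarrow> 1 \<le> j \<Longrightarrow> j < n \<Longrightarrow> i + 2 \<le> j \<or> j + 2 \<le> i \<Longrightarrow>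
        basic_rel n [(i, True), (j, True)] [(j, True), (i, True)]"
| near: "1 \<le> i \<Longrightarrow> i < n \<Longrightarrow> 1 \<le> j \<Longrightarrow> j < n \<Longrightarrow> i = j + 1 \<or> j = i + 1 \<Longrightarrow>
        basic_rel n [(i, True), (j, True), (i, True)] [(j, True), (i, True), (j, True)]"

inductive braid_eq :: "nat \<Rightarrow> bword \<Rightarrow> bword \<Rightarrow> bool" for n where
  refl: "valid_word n w \<Longrightarrow> braid_eq n w w"
| step: "valid_word n u \<Longrightarrow> valid_word n v \<Longrightarrow> basic_rel n l r \<Longrightarrow>
         braid_eq n (u @ l @ v) (u @ r @ v)"
| sym: "braid_eq n w w' \<Longrightarrow> braid_eq n w' w"
| trans: "braid_eq n w w' \<Longrightarrow> braid_eq n w' w'' \<Longrightarrow> braid_eq n w w''"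

definition i_positive_word :: "nat \<Rightarrow> bword \<Rightarrow> bool" where
  "i_positive_word i w \<longleftrightarrow>
     (\<forall>(j, e) \<in> set w. 1 \<le> j \<and> j \<le> i) \<and> (i, True) \<in> set w \<and> (i, False) \<notin> set w"

definition dehornoy_positive :: "nat \<Rightarrow> bword \<Rightarrow> bool" where
  "dehornoy_positive n w \<longleftrightarrow> (\<exists>i w'. 1 \<le> i \<and> braid_eq n w w' \<and> i_positive_word i w')"

definition dehornoy_less :: "nat \<Rightarrow> bword \<Rightarrow> bword \<Rightarrow> bool" where
  "dehornoy_less n f g \<longleftrightarrow> dehornoy_positive n (inv_word f @ g)"

definition commutator_word :: "bword \<Rightarrow> bword \<Rightarrow> bword" where
  "commutator_word a b = a @ b @ inv_word a @ inv_word b"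

text \<open>Membership in the commutator subgroup [B_n, B_n]: equal in B_n to a finite product
  of commutators (inverses of commutators are commutators).\<close>
definition in_commutator_subgroup :: "nat \<Rightarrow> bword \<Rightarrow> bool" where
  "in_commutator_subgroup n w \<longleftrightarrow> valid_word n w \<and>
     (\<exists>ps. (\<forall>(a, b) \<in> set ps. valid_word n a \<and> valid_word n b) \<and>
           braid_eq n w (concat (map (\<lambda>(a, b). commutator_word a b) ps)))"

end

theory Submission
  imports Defs
begin

text \<open>Let f < g in the commutator subgroup, so that f^-1 g is represented by an i-positive
  word w. The exponent sum vanishes on [B_n, B_n] while a 1-positive word has positive exponent
  sum, so i \<ge> 2. Let c be the conjugate of sigma_1 sigma_2^-1 by a word s in sigma_1 only.
  Then c^-1 is 2-positive, and c = [sigma_1, sigma_1 sigma_2]^s is a commutator, so h = g c lies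
  in [B_n, B_n] and h < g. It remains to choose s so that w c is positive, which gives f < h.
  If i \<ge> 3, take s empty. If i = 2, write w = w' sigma_2 s with s free of sigma_2; then
  w c = w' sigma_2 sigma_1 sigma_2^-1 s = w' sigma_1^-1 sigma_2 sigma_1 s is again 2-positive.\<close>

lemma valid_word_Nil [simp]: "valid_word n []"
  by (simp add: valid_word_def)

lemma valid_word_Cons [simp]: "valid_word n ((i, e) # w) \<longleftrightarrow> 1 \<le> i \<and> i < n \<and> valid_word n w"
  by (auto simp: valid_word_def)

lemma valid_word_append [simp]: "valid_word n (u @ v) \<longleftrightarrow> valid_word n u \<and> valid_word n v"
  by (auto simp: valid_word_def)

lemma inv_word_Nil [simp]: "inv_word [] = []"
  by (simp add: inv_word_def)

lemma inv_word_Cons [simp]: "inv_word ((i, e) # w) = inv_word w @ [(i, \<not> e)]"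
  by (simp add: inv_word_def)

lemma inv_word_append [simp]: "inv_word (u @ v) = inv_word v @ inv_word u"
  by (simp add: inv_word_def)

lemma inv_word_inv_word [simp]: "inv_word (inv_word w) = w"
  by (induction w) (auto simp: inv_word_def)

lemma valid_word_inv_word [simp]: "valid_word n (inv_word w) \<longleftrightarrow> valid_word n w"
  by (induction w) auto

lemma basic_rel_valid: "basic_rel n l r \<Longrightarrow> valid_word n l \<and> valid_word n r"
  by (induction rule: basic_rel.induct) auto

lemma braid_eq_valid: "braid_eq n u v \<Longrightarrow> valid_word n u \<and> valid_word n v"
  by (induction rule: braid_eq.induct) (auto dest: basic_rel_valid)

declare braid_eq.trans [trans]

lemma braid_eq_append_right: "braid_eq n u v \<Longrightarrow> valid_word n w \<Longrightarrow> braid_eq n (u @ w) (v @ w)"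
proof (induction rule: braid_eq.induct)
  case (step x y l r)
  then show ?case using braid_eq.step[of n x "y @ w" l r] by auto
qed (auto intro: braid_eq.intros)

lemma braid_eq_append_left: "braid_eq n u v \<Longrightarrow> valid_word n w \<Longrightarrow> braid_eq n (w @ u) (w @ v)"
proof (induction rule: braid_eq.induct)
  case (step x y l r)
  then show ?case using braid_eq.step[of n "w @ x" y l r] by auto
qed (auto intro: braid_eq.intros)

lemma braid_eq_append: "braid_eq n u u' \<Longrightarrow> braid_eq n v v' \<Longrightarrow> braid_eq n (u @ v) (u' @ v')"
  by (meson braid_eq_append_left braid_eq_append_right braid_eq_valid braid_eq.trans)

lemma braid_eq_append_inv_word: "valid_word n u \<Longrightarrow> braid_eq n (u @ inv_word u) []"
proof (induction u)
  case Nil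
  then show ?case by (auto intro: braid_eq.refl)
next
  case (Cons x u)
  obtain i e where x: "x = (i, e)" by (cases x)
  with Cons.prems have valid: "1 \<le> i" "i < n" "valid_word n u" by auto
  have "braid_eq n ([x] @ (u @ inv_word u) @ [(i, \<not> e)]) ([x] @ [] @ [(i, \<not> e)])"
    using Cons valid x by (intro braid_eq_append braid_eq_append_right) (auto intro: braid_eq.refl)
  moreover have "braid_eq n ([] @ [(i, e), (i, \<not> e)] @ []) ([] @ [] @ [])"
    using valid by (intro braid_eq.step basic_rel.cancel) auto
  ultimately show ?case using x by (auto intro: braid_eq.trans)
qed

lemma braid_eq_inv_word_append: "valid_word n u \<Longrightarrow> braid_eq n (inv_word u @ u) []"
  using braid_eq_append_inv_word[of n "inv_word u"] by simp

lemma braid_eq_insert_append_inv_word: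
  assumes "valid_word n x" "valid_word n y" "valid_word n u"
  shows "braid_eq n (x @ y) (x @ u @ inv_word u @ y)"
proof -
  have "braid_eq n (x @ (u @ inv_word u) @ y) (x @ [] @ y)"
    using assms by (intro braid_eq_append_left braid_eq_append_right braid_eq_append_inv_word) auto
  then show ?thesis by (auto intro: braid_eq.sym)
qed

definition conj_word :: "bword \<Rightarrow> bword \<Rightarrow> bword" where
  "conj_word s w = inv_word s @ w @ s"

lemma valid_word_conj_word [simp]:
  "valid_word n (conj_word s w) \<longleftrightarrow> valid_word n s \<and> valid_word n w"
  by (auto simp: conj_word_def)

lemma braid_eq_conj_word: "braid_eq n u v \<Longrightarrow> valid_word n s \<Longrightarrow>
    braid_eq n (conj_word s u) (conj_word s v)"
  unfolding conj_word_def by (intro braid_eq_append_left braid_eq_append_right) auto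

lemma braid_eq_conj_commutator_word:
  assumes "valid_word n s" "valid_word n a" "valid_word n b"
  shows "braid_eq n (conj_word s (commutator_word a b))
    (commutator_word (conj_word s a) (conj_word s b))"
proof -
  let ?u = "inv_word s" and ?ia = "inv_word a" and ?ib = "inv_word b"
  have "braid_eq n ((?u @ a) @ (b @ ?ia @ ?ib @ s)) ((?u @ a) @ s @ ?u @ (b @ ?ia @ ?ib @ s))"
    using assms by (intro braid_eq_insert_append_inv_word) auto
  moreover have "braid_eq n ((?u @ a @ s @ ?u @ b) @ (?ia @ ?ib @ s))
      ((?u @ a @ s @ ?u @ b) @ s @ ?u @ (?ia @ ?ib @ s))"
    using assms by (intro braid_eq_insert_append_inv_word) auto
  moreover have "braid_eq n ((?u @ a @ s @ ?u @ b @ s @ ?u @ ?ia) @ (?ib @ s))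
      ((?u @ a @ s @ ?u @ b @ s @ ?u @ ?ia) @ s @ ?u @ (?ib @ s))"
    using assms by (intro braid_eq_insert_append_inv_word) auto
  ultimately show ?thesis
    unfolding commutator_word_def conj_word_def by simp (meson braid_eq.trans)
qed

lemma in_commutator_subgroup_append_commutator:
  assumes "in_commutator_subgroup n g" "valid_word n a" "valid_word n b"
    and "braid_eq n c (commutator_word a b)"
  shows "in_commutator_subgroup n (g @ c)"
proof -
  obtain ps where ps: "\<forall>(a, b) \<in> set ps. valid_word n a \<and> valid_word n b"
    "braid_eq n g (concat (map (\<lambda>(a, b). commutator_word a b) ps))"
    using assms(1) unfolding in_commutator_subgroup_def by auto
  have "braid_eq n (g @ c) (concat (map (\<lambda>(a, b). commutator_word a b) (ps @ [(a, b)])))"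
    using braid_eq_append[OF ps(2) assms(4)] by simp
  then show ?thesis
    unfolding in_commutator_subgroup_def using ps(1) assms(2,3) braid_eq_valid[OF ps(2)]
      braid_eq_valid[OF assms(4)]
    by (intro conjI exI[of _ "ps @ [(a, b)]"]) auto
qed

definition exp_sum :: "bword \<Rightarrow> int" where
  "exp_sum w = sum_list (map (\<lambda>(i, e). if e then 1 else -1) w)"

lemma exp_sum_Nil [simp]: "exp_sum [] = 0"
  by (simp add: exp_sum_def)

lemma exp_sum_Cons [simp]: "exp_sum ((i, e) # w) = (if e then 1 else -1) + exp_sum w"
  by (simp add: exp_sum_def)

lemma exp_sum_append [simp]: "exp_sum (u @ v) = exp_sum u + exp_sum v"
  by (simp add: exp_sum_def)

lemma exp_sum_inv_word [simp]: "exp_sum (inv_word w) = - exp_sum w"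
  by (induction w) auto

lemma basic_rel_exp_sum: "basic_rel n l r \<Longrightarrow> exp_sum l = exp_sum r"
  by (induction rule: basic_rel.induct) auto

lemma braid_eq_exp_sum: "braid_eq n u v \<Longrightarrow> exp_sum u = exp_sum v"
  by (induction rule: braid_eq.induct) (auto dest: basic_rel_exp_sum)

lemma exp_sum_in_commutator_subgroup:
  assumes "in_commutator_subgroup n w"
  shows "exp_sum w = 0"
proof -
  obtain ps where "braid_eq n w (concat (map (\<lambda>(a, b). commutator_word a b) ps))"
    using assms unfolding in_commutator_subgroup_def by blast
  moreover have "exp_sum (concat (map (\<lambda>(a, b). commutator_word a b) ps)) = 0" for ps
    by (induction ps) (auto simp: commutator_word_def)
  ultimately show ?thesis by (simp add: braid_eq_exp_sum)
qed

lemma exp_sum_pos_if_1_positive: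
  assumes "i_positive_word 1 w"
  shows "exp_sum w > 0"
proof -
  have "set w \<subseteq> {(1, True)}"
  proof
    fix x assume "x \<in> set w"
    moreover obtain j e where x: "x = (j, e)" by (cases x)
    ultimately have "j = 1" "(1, False) \<notin> set w" "x \<in> set w"
      using assms unfolding i_positive_word_def by fastforce+
    with x show "x \<in> {(1, True)}" by (cases e) auto
  qed
  moreover have "w \<noteq> []" using assms by (auto simp: i_positive_word_def)
  ultimately show ?thesis
  proof (induction w)
    case (Cons x w)
    then show ?case by (cases w) auto
  qed simp
qed

lemma sigma2_sigma1_sigma2_inv:
  assumes "n \<ge> 3"
  shows "braid_eq n [(2, True), (1, True), (2, False)] [(1, False), (2, True), (1, True)]"
proof -
  have "braid_eq n ([(1, False), (2, True), (1, True)] @ [(2, True), (2, False)] @ [])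
      ([(1, False), (2, True), (1, True)] @ [] @ [])"
    using assms by (intro braid_eq.step) (auto intro: basic_rel.cancel[of 2 n True, simplified])
  moreover have "braid_eq n ([(1, False)] @ [(2, True), (1, True), (2, True)] @ [(2, False)])
      ([(1, False)] @ [(1, True), (2, True), (1, True)] @ [(2, False)])"
    using assms by (intro braid_eq.step) (auto intro: basic_rel.near)
  moreover have "braid_eq n ([] @ [(1, False), (1, True)] @ [(2, True), (1, True), (2, False)])
      ([] @ [] @ [(2, True), (1, True), (2, False)])"
    using assms by (intro braid_eq.step) (auto intro: basic_rel.cancel[of 1 n False, simplified])
  ultimately show ?thesis by simp (meson braid_eq.sym braid_eq.trans)
qed

text \<open>The braid relation gives sigma_1 sigma_2 sigma_1^-1 (sigma_1 sigma_2)^-1 = sigma_2^-1.\<close>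
lemma sigma1_sigma2_inv_eq_commutator:
  assumes "n \<ge> 3"
  shows "braid_eq n [(1, True), (2, False)] (commutator_word [(1, True)] [(1, True), (2, True)])"
proof -
  have "braid_eq n ([(2, False)] @ ([(1, True), (2, True), (1, True)]
      @ inv_word [(1, True), (2, True), (1, True)])) ([(2, False)] @ [])"
    using assms by (intro braid_eq_append_left braid_eq_append_inv_word) auto
  moreover have "braid_eq n ([(2, False)] @ [(1, True), (2, True), (1, True)] @ [(1, False), (2, False), (1, False)])
      ([(2, False)] @ [(2, True), (1, True), (2, True)] @ [(1, False), (2, False), (1, False)])"
    using assms by (intro braid_eq.step) (auto intro: basic_rel.near)
  moreover have "braid_eq n ([] @ [(2, False), (2, True)] @ [(1, True), (2, True), (1, False), (2, False), (1, False)])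
      ([] @ [] @ [(1, True), (2, True), (1, False), (2, False), (1, False)])"
    using assms by (intro braid_eq.step) (auto intro: basic_rel.cancel[of 2 n False, simplified])
  ultimately have "braid_eq n [(2, False)] [(1, True), (2, True), (1, False), (2, False), (1, False)]"
    by simp (meson braid_eq.sym braid_eq.trans)
  then have "braid_eq n ([(1, True)] @ [(2, False)])
      ([(1, True)] @ [(1, True), (2, True), (1, False), (2, False), (1, False)])"
    using assms by (intro braid_eq_append_left) auto
  then show ?thesis by (simp add: commutator_word_def)
qed

lemma in_commutator_subgroup_append_conj_sigma1_sigma2_inv:
  assumes "n \<ge> 3" "in_commutator_subgroup n g" "valid_word n s"
  shows "in_commutator_subgroup n (g @ conj_word s [(1, True), (2, False)])"
proof (rule in_commutator_subgroup_append_commutator[OF assms(2)])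
  let ?a = "[(1, True)]" and ?b = "[(1, True), (2, True)]"
  show "valid_word n (conj_word s ?a)" "valid_word n (conj_word s ?b)"
    using assms by auto
  have "braid_eq n (conj_word s [(1, True), (2, False)]) (conj_word s (commutator_word ?a ?b))"
    using assms by (intro braid_eq_conj_word sigma1_sigma2_inv_eq_commutator)
  also have "braid_eq n \<dots> (commutator_word (conj_word s ?a) (conj_word s ?b))"
    using assms by (intro braid_eq_conj_commutator_word) auto
  finally show "braid_eq n (conj_word s [(1, True), (2, False)])
      (commutator_word (conj_word s ?a) (conj_word s ?b))" .
qed

lemma valid_word_if_letters_1:
  "2 \<le> n \<Longrightarrow> \<forall>x\<in>set s. fst x = 1 \<Longrightarrow> valid_word n s"
  by (auto simp: valid_word_def)

lemma dehornoy_less_append_conj_sigma1_sigma2_inv: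
  assumes "valid_word n g" "n \<ge> 3" "\<forall>x\<in>set s. fst x = 1"
  shows "dehornoy_less n (g @ conj_word s [(1, True), (2, False)]) g"
proof -
  let ?c = "conj_word s [(1, True), (2, False)]"
  have "braid_eq n (inv_word ?c @ (inv_word g @ g)) (inv_word ?c @ [])"
    using assms valid_word_if_letters_1[of n s]
    by (intro braid_eq_append_left braid_eq_inv_word_append) auto
  then have "braid_eq n (inv_word (g @ ?c) @ g) (inv_word ?c)"
    by simp
  moreover have "i_positive_word 2 (inv_word ?c)"
    using assms(3) by (auto simp: conj_word_def i_positive_word_def inv_word_def)
  ultimately show ?thesis
    unfolding dehornoy_less_def dehornoy_positive_def by (intro exI[of _ 2]) auto
qed

text \<open>Here s is the part of w after its last letter sigma_2.\<close>
lemma two_positive_append_conj_sigma1_sigma2_inv: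
  assumes "n \<ge> 3" "valid_word n w" "i_positive_word 2 w"
  obtains s q where "\<forall>x\<in>set s. fst x = 1" "i_positive_word 2 q"
    "braid_eq n (w @ conj_word s [(1, True), (2, False)]) q"
proof -
  have "(2, True) \<in> set w" using assms(3) by (simp add: i_positive_word_def)
  then obtain u s where w: "w = u @ (2, True) # s" "(2, True) \<notin> set s"
    by (meson split_list_last)
  have s: "\<forall>x\<in>set s. fst x = 1"
  proof
    fix x assume "x \<in> set s"
    moreover obtain j e where x: "x = (j, e)" by (cases x)
    ultimately have "1 \<le> j" "j \<le> 2" "(2, False) \<notin> set s" "x \<in> set s"
      using assms(3) unfolding w(1) i_positive_word_def by fastforce+
    with x w(2) show "fst x = 1" by (cases e; cases "j = 2") auto
  qed
  have valid: "valid_word n u" "valid_word n s" using assms(2) w by auto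
  let ?q = "u @ [(1, False), (2, True), (1, True)] @ s"
  have "braid_eq n ((u @ [(2, True)]) @ (s @ inv_word s) @ ([(1, True), (2, False)] @ s))
      ((u @ [(2, True)]) @ [] @ ([(1, True), (2, False)] @ s))"
    using valid assms(1) by (intro braid_eq_append_left braid_eq_append_right braid_eq_append_inv_word) auto
  moreover have "braid_eq n (u @ [(2, True), (1, True), (2, False)] @ s) ?q"
    using valid sigma2_sigma1_sigma2_inv[OF assms(1)] by (intro braid_eq_append_left braid_eq_append_right) auto
  ultimately have "braid_eq n (w @ conj_word s [(1, True), (2, False)]) ?q"
    unfolding conj_word_def w(1) by simp (meson braid_eq.trans)
  moreover have "i_positive_word 2 ?q"
    using assms(3) s unfolding w(1) i_positive_word_def by auto
  ultimately show ?thesis using s that by blast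
qed

lemma i_positive_append_conj_sigma1_sigma2_inv:
  assumes "n \<ge> 3" "valid_word n w" "i_positive_word i w" "2 \<le> i"
  obtains s q j where "\<forall>x\<in>set s. fst x = 1" "1 \<le> j" "i_positive_word j q"
    "braid_eq n (w @ conj_word s [(1, True), (2, False)]) q"
proof (cases "i = 2")
  case True
  with assms(1-3) obtain s q where "\<forall>x\<in>set s. fst x = 1" "i_positive_word 2 q"
    "braid_eq n (w @ conj_word s [(1, True), (2, False)]) q"
    by (auto elim: two_positive_append_conj_sigma1_sigma2_inv)
  then show ?thesis by (intro that[of s 2 q]) auto
next
  case False
  then have "i_positive_word i (w @ conj_word [] [(1, True), (2, False)])"
    using assms(3,4) by (auto simp: i_positive_word_def conj_word_def)
  moreover have "braid_eq n (w @ conj_word [] [(1, True), (2, False)]) (w @ conj_word [] [(1, True), (2, False)])"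
    using assms(1,2) by (intro braid_eq.refl) (auto simp: conj_word_def)
  ultimately show ?thesis using assms(4) by (intro that[of "[]" i]) auto
qed

theorem proposition3p1:
  fixes n :: nat and f g :: bword
  assumes "n \<ge> 3"
    and "in_commutator_subgroup n f" and "in_commutator_subgroup n g"
    and "dehornoy_less n f g"
  shows "\<exists>h. in_commutator_subgroup n h \<and> dehornoy_less n f h \<and> dehornoy_less n h g"
proof -
  obtain i w where "1 \<le> i" and fg: "braid_eq n (inv_word f @ g) w" and w: "i_positive_word i w"
    using assms(4) unfolding dehornoy_less_def dehornoy_positive_def by blast
  have "exp_sum w = 0"
    using braid_eq_exp_sum[OF fg] assms(2,3) by (simp add: exp_sum_in_commutator_subgroup)
  then have "i \<noteq> 1" using w exp_sum_pos_if_1_positive by force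
  with \<open>1 \<le> i\<close> have "2 \<le> i" by linarith
  then obtain s q j where s: "\<forall>x\<in>set s. fst x = 1" and "1 \<le> j" "i_positive_word j q"
    and wq: "braid_eq n (w @ conj_word s [(1, True), (2, False)]) q"
    using i_positive_append_conj_sigma1_sigma2_inv assms(1) w braid_eq_valid[OF fg] by metis
  define h where "h = g @ conj_word s [(1, True), (2, False)]"
  have valid_s: "valid_word n s" using s assms(1) by (intro valid_word_if_letters_1) auto
  have "braid_eq n ((inv_word f @ g) @ conj_word s [(1, True), (2, False)])
      (w @ conj_word s [(1, True), (2, False)])"
    using fg valid_s assms(1) by (intro braid_eq_append_right) auto
  then have "braid_eq n (inv_word f @ h) q"
    using wq unfolding h_def by (auto intro: braid_eq.trans)
  then have "dehornoy_less n f h"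
    using \<open>1 \<le> j\<close> \<open>i_positive_word j q\<close> by (auto simp: dehornoy_less_def dehornoy_positive_def)
  moreover have "dehornoy_less n h g"
    unfolding h_def using braid_eq_valid[OF fg] assms(1) s
    by (intro dehornoy_less_append_conj_sigma1_sigma2_inv) simp_all
  moreover have "in_commutator_subgroup n h"
    unfolding h_def using assms(1,3) valid_s by (rule in_commutator_subgroup_append_conj_sigma1_sigma2_inv)
  ultimately show ?thesis by blast
qed

end
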